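(* Let the Algorithm and assumptions (A1)–(A4) be as in the context, with constants $L_H,K_H,\delta_g,\delta_H,\nu$, assume $\sigma_0\le2\gamma L_H$, assume $f$ attains its minimum over $\mathcal M$, and suppose that for every iteration $k$, $\delta_g\le\frac{9\delta_H^2}{4\sigma_k}$ and \[ \delta_H\le\min\Big\{\min\{\tfrac1{18},\tfrac{1-\rho_{TH}}{9}\}\big(\sqrt{K_H^2+4\sigma_k\varepsilon_g}-K_H\big),\ \min\{\tfrac19,\tfrac{2(1-\rho_{TH})}{9}\}\nu\varepsilon_H\Big\}. \] Then the Algorithm terminates after at most $\mathcal O(\max\{\varepsilon_g^{-2},\varepsilon_H^{-3}\})$ iterations.
   Context: Let $\mathcal M$ be a connected complete Riemannian manifold; $\langle\cdot,\cdot\rangle$ and $\|\cdot\|$ denote the inner product and norm on tangent spaces $T_x\mathcal M$. Let $f=\frac1n\sum_{i=1}^n f_i$ with each $f_i:\mathcal M\to\mathbb R$ twice continuously differentiable; $\mathrm{grad} f$ is the Riemannian gradient. A retraction is a smooth map $R:T\mathcal M\to\mathcal M$ whose restriction $R_x$ to $T_x\mathcal M$ satisfies $R_x(0_x)=x$, $DR_x(0_x)=\mathrm{Id}$. $\nabla^2 f\circ R_x(0_x)$ is the Hessian at $0_x$ of $f\circ R_x$ on the inner-product space $T_x\mathcal M$. $\lambda_{\min}(H)$ denotes the smallest eigenvalue of a self-adjoint operator $H$. Algorithm: fix $\varepsilon_g,\varepsilon_H,\rho_{TH}\in(0,1)$, $\gamma>1$, $x_0\in\mathcal M$, $\sigma_0>0$.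 At iteration $k$: construct $G_k\in T_{x_k}\mathcal M$ and self-adjoint linear $H_k$ on $T_{x_k}\mathcal M$; if $\|G_k\|\le\varepsilon_g$ and $\lambda_{\min}(H_k)\ge-\varepsilon_H$, stop and return $x_k$; otherwise choose $\eta_k\in T_{x_k}\mathcal M$ approximately minimizing $m_k(\eta):=\langle G_k,\eta\rangle+\frac12\langle H_k[\eta],\eta\rangle+\frac13\sigma_k\|\eta\|^3$, set $\rho_k=\frac{f(x_k)-f\circ R_{x_k}(\eta_k)}{-m_k(\eta_k)}$; if $\rho_k\ge\rho_{TH}$ set $x_{k+1}=R_{x_k}(\eta_k)$, $\sigma_{k+1}=\sigma_k/\gamma$, else $x_{k+1}=x_k$, $\sigma_{k+1}=\gamma\sigma_k$. Cauchy point and eigenpoint: $\eta_k^C:=-\alpha^C G_k$ with $\alpha^C\in\arg\min_{\alpha\ge0}m_k(-\alpha G_k)$. Fix $\nu\in(0,1)$. When $\lambda_{\min}(H_k)<0$, $\eta_k^E:=\alpha^E u_k$ where $u_k$ satisfies $\langle u_k,H_k[u_k]\rangle\le\nu\lambda_{\min}(H_k)\|u_k\|^2<0$ and $\langle G_k,u_k\rangle\le0$, and $\alpha^E\in\arg\min_{\alpha\ge0}m_k(\alpha u_k)$. Assumptions: (A1) there is $L_H>0$ with $\big|f\circ R_{x_k}(\eta_k)-f(x_k)-\langle\mathrm{grad} f(x_k),\eta_k\rangle-\frac12\langle\nabla^2 f\circ R_{x_k}(0_{x_k})[\eta_k],\eta_k\rangle\big|\le\frac12L_H\|\eta_k\|^3$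 for all $k$. (A2) there is $K_H>0$ with $\|H_k\|:=\sup_{\|\eta\|\le1}\langle\eta,H_k[\eta]\rangle\le K_H$ for all $k$. (A3) there are $\delta_g,\delta_H\in(0,1)$ with $\|G_k-\mathrm{grad} f(x_k)\|\le\delta_g$ and $\|(H_k-\nabla^2 f\circ R_{x_k}(0_{x_k}))[\eta_k]\|\le\delta_H\|\eta_k\|$ for all $k$. (A4) for all $k$, $-m_k(\eta_k)\ge-m_k(\eta_k^C)$, and $-m_k(\eta_k)\ge-m_k(\eta_k^E)$ whenever $\lambda_{\min}(H_k)<0$. The constant in $\mathcal O(\cdot)$ is independent of $\varepsilon_g,\varepsilon_H$ (it may depend on $f(x_0)-\min f$, $\rho_{TH},\nu,\gamma,L_H,K_H,\sigma_0$). *)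

theory Defs
  imports "HOL-Analysis.Analysis"
begin

text \<open>Points of the manifold form a type 'm;
  every tangent space T_x M is identified (by a chosen linear isometry) with one fixed
  finite-dimensional real inner product space 'v.  A retraction is a map
  R :: 'm => 'v => 'm with R x 0 = x.  Because DR_x(0) = Id, the Riemannian gradient of f
  at x is the Euclidean gradient at 0 of the pullback f o R_x, and the operator
  nabla^2 (f o R_x)(0_x) is the Euclidean Hessian at 0 of the pullback.\<close>

definition egrad :: "('v::euclidean_space \<Rightarrow> real) \<Rightarrow> 'v \<Rightarrow> 'v" where
  "egrad \<phi> y = (\<Sum>b\<in>Basis. frechet_derivative \<phi> (at y) b *\<^sub>R b)"

definition ehess :: "('v::euclidean_space \<Rightarrow> real) \<Rightarrow> 'v \<Rightarrow> 'v \<Rightarrow> 'v" where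
  "ehess \<phi> y = frechet_derivative (egrad \<phi>) (at y)"

definition C2 :: "('v::euclidean_space \<Rightarrow> real) \<Rightarrow> bool" where
  "C2 \<phi> \<longleftrightarrow> (\<forall>y. \<phi> differentiable (at y)) \<and> (\<forall>y. egrad \<phi> differentiable (at y))
      \<and> (\<forall>u w. continuous_on UNIV (\<lambda>y. ehess \<phi> y u \<bullet> w))"

definition self_adjoint :: "('v::euclidean_space \<Rightarrow> 'v) \<Rightarrow> bool" where
  "self_adjoint H \<longleftrightarrow> linear H \<and> (\<forall>u w. H u \<bullet> w = u \<bullet> H w)"

definition eigenvalues :: "('v::euclidean_space \<Rightarrow> 'v) \<Rightarrow> real set" where
  "eigenvalues H = {l. \<exists>u. u \<noteq> 0 \<and> H u = l *\<^sub>R u}"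

definition lambda_min :: "('v::euclidean_space \<Rightarrow> 'v) \<Rightarrow> real" where
  "lambda_min H = Min (eigenvalues H)"

text \<open>The quantity called the norm of H_k in (A2), literally as defined there.\<close>
definition qnorm :: "('v::euclidean_space \<Rightarrow> 'v) \<Rightarrow> real" where
  "qnorm H = Sup {\<eta> \<bullet> H \<eta> | \<eta>. norm \<eta> \<le> 1}"

definition cmodel :: "'v::euclidean_space \<Rightarrow> ('v \<Rightarrow> 'v) \<Rightarrow> real \<Rightarrow> 'v \<Rightarrow> real" where
  "cmodel g H s \<eta> = g \<bullet> \<eta> + 1/2 * (H \<eta> \<bullet> \<eta>) + s/3 * norm \<eta> ^ 3"

definition stop_cond :: "real \<Rightarrow> real \<Rightarrow> 'v::euclidean_space \<Rightarrow> ('v \<Rightarrow> 'v) \<Rightarrow> bool" where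
  "stop_cond \<epsilon>g \<epsilon>H g H \<longleftrightarrow> norm g \<le> \<epsilon>g \<and> lambda_min H \<ge> - \<epsilon>H"

definition favg :: "(nat \<Rightarrow> 'm \<Rightarrow> real) \<Rightarrow> nat \<Rightarrow> 'm \<Rightarrow> real" where
  "favg fs n y = (\<Sum>i<n. fs i y) / real n"

text \<open>Iteration k is executed iff the stopping test failed at all j < k.
  Steps, ratios and updates are only constrained at executed iterations that do not stop.\<close>
definition valid_run ::
  "(nat \<Rightarrow> 'm \<Rightarrow> real) \<Rightarrow> nat \<Rightarrow> ('m \<Rightarrow> 'v::euclidean_space \<Rightarrow> 'm) \<Rightarrow>
   real \<Rightarrow> real \<Rightarrow> real \<Rightarrow> real \<Rightarrow> real \<Rightarrow>
   real \<Rightarrow> real \<Rightarrow> real \<Rightarrow> real \<Rightarrow> real \<Rightarrow>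
   (nat \<Rightarrow> 'm) \<Rightarrow> (nat \<Rightarrow> real) \<Rightarrow> (nat \<Rightarrow> 'v) \<Rightarrow> (nat \<Rightarrow> 'v \<Rightarrow> 'v) \<Rightarrow> (nat \<Rightarrow> 'v) \<Rightarrow> bool"
where
  "valid_run fs n R \<rho>TH \<gamma> \<sigma>0 \<nu> LH KH \<epsilon>g \<epsilon>H \<delta>g \<delta>H x \<sigma> G H \<eta> \<longleftrightarrow>
    (let f = favg fs n;
         pb = (\<lambda>k v. f (R (x k) v));
         executed = (\<lambda>k. \<forall>j<k. \<not> stop_cond \<epsilon>g \<epsilon>H (G j) (H j));
         m = (\<lambda>k. cmodel (G k) (H k) (\<sigma> k))
     in n \<ge> 1
      \<and> (\<forall>i<n. \<forall>y. C2 (\<lambda>v. fs i (R y v)))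
      \<and> (\<forall>y. R y 0 = y)
      \<and> 0 < \<epsilon>g \<and> \<epsilon>g < 1 \<and> 0 < \<epsilon>H \<and> \<epsilon>H < 1
      \<and> 0 < \<delta>g \<and> \<delta>g < 1 \<and> 0 < \<delta>H \<and> \<delta>H < 1
      \<and> \<sigma> 0 = \<sigma>0
      \<and> (\<forall>k. executed k \<longrightarrow>
            self_adjoint (H k)
          \<and> qnorm (H k) \<le> KH
          \<and> norm (G k - egrad (pb k) 0) \<le> \<delta>g
          \<and> \<delta>g \<le> 9 * \<delta>H^2 / (4 * \<sigma> k)
          \<and> \<delta>H \<le> min (min (1/18) ((1 - \<rho>TH)/9) * (sqrt (KH^2 + 4 * \<sigma> k * \<epsilon>g) - KH))
                      (min (1/9) (2 * (1 - \<rho>TH)/9) * \<nu> * \<epsilon>H))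
      \<and> (\<forall>k. executed k \<and> \<not> stop_cond \<epsilon>g \<epsilon>H (G k) (H k) \<longrightarrow>
            \<bar>pb k (\<eta> k) - f (x k) - egrad (pb k) 0 \<bullet> \<eta> k - 1/2 * (ehess (pb k) 0 (\<eta> k) \<bullet> \<eta> k)\<bar>
               \<le> 1/2 * LH * norm (\<eta> k) ^ 3
          \<and> norm (H k (\<eta> k) - ehess (pb k) 0 (\<eta> k)) \<le> \<delta>H * norm (\<eta> k)
          \<and> (\<exists>\<alpha>C. \<alpha>C \<ge> 0 \<and> (\<forall>\<alpha>\<ge>0. m k (- \<alpha>C *\<^sub>R G k) \<le> m k (- \<alpha> *\<^sub>R G k))
                   \<and> - m k (\<eta> k) \<ge> - m k (- \<alpha>C *\<^sub>R G k))
          \<and> (lambda_min (H k) < 0 \<longrightarrow>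
               (\<exists>u \<alpha>E. u \<bullet> H k u \<le> \<nu> * lambda_min (H k) * norm u ^ 2
                   \<and> \<nu> * lambda_min (H k) * norm u ^ 2 < 0
                   \<and> G k \<bullet> u \<le> 0
                   \<and> \<alpha>E \<ge> 0 \<and> (\<forall>\<alpha>\<ge>0. m k (\<alpha>E *\<^sub>R u) \<le> m k (\<alpha> *\<^sub>R u))
                   \<and> - m k (\<eta> k) \<ge> - m k (\<alpha>E *\<^sub>R u)))
          \<and> (let \<rho> = (f (x k) - pb k (\<eta> k)) / (- m k (\<eta> k)) in
               if \<rho> \<ge> \<rho>TH then x (Suc k) = R (x k) (\<eta> k) \<and> \<sigma> (Suc k) = \<sigma> k / \<gamma>
               else x (Suc k) = x k \<and> \<sigma> (Suc k) = \<gamma> * \<sigma> k)))"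

end

theory Submission
  imports Defs
begin

text \<open>At an iterate where the stopping test fails, the Cauchy point (if \<open>norm G\<^sub>k > \<epsilon>g\<close>) or
  the eigenpoint (if \<open>lambda_min H\<^sub>k < -\<epsilon>H\<close>) decreases the cubic model by at least
  \<open>cubic_decrease K\<^sub>H \<nu> \<sigma>\<^sub>k \<epsilon>g \<epsilon>H\<close>.  The bounds on \<open>\<delta>g\<close> and \<open>\<delta>H\<close> make the gap between
  \<open>f \<circ> R\<close> and the model at most \<open>1 - \<rho>TH\<close> times this decrease once \<open>\<sigma>\<^sub>k \<ge> 3 L\<^sub>H\<close>, so such
  iterations succeed and \<open>\<sigma>\<^sub>k\<close> never exceeds \<open>3 \<gamma> L\<^sub>H\<close>.  Hence every successful iteration
  decreases \<open>f\<close> by some \<open>c \<ge> const \<cdot> min \<epsilon>g\<^sup>2 \<epsilon>H\<^sup>3\<close>, and the potential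
  \<open>2 f(x\<^sub>k) / c - log\<^sub>\<gamma> \<sigma>\<^sub>k\<close>, which is bounded below, drops by at least 1 at every iteration.\<close>

lemma inner_le_qnorm:
  fixes H :: "'v::euclidean_space \<Rightarrow> 'v"
  assumes lin: "linear H" and q: "qnorm H \<le> K"
  shows "v \<bullet> H v \<le> K * norm v ^ 2"
proof (cases "v = 0")
  case True
  then show ?thesis using linear_0[OF lin] by simp
next
  case False
  obtain B where B: "\<And>x. norm (H x) \<le> B * norm x" using linear_bounded[OF lin] by blast
  have "bdd_above {\<eta> \<bullet> H \<eta> | \<eta>. norm \<eta> \<le> 1}"
  proof (rule bdd_aboveI)
    fix y assume "y \<in> {\<eta> \<bullet> H \<eta> | \<eta>. norm \<eta> \<le> 1}"
    then obtain \<eta> where y: "y = \<eta> \<bullet> H \<eta>" and \<eta>: "norm \<eta> \<le> 1" by blast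
    have "y \<le> norm \<eta> * norm (H \<eta>)" using y norm_cauchy_schwarz by simp
    also have "\<dots> \<le> norm \<eta> * (\<bar>B\<bar> * norm \<eta>)"
    proof (rule mult_left_mono)
      show "norm (H \<eta>) \<le> \<bar>B\<bar> * norm \<eta>"
        using B[of \<eta>] abs_ge_self[of B] by (meson mult_right_mono norm_ge_zero order_trans)
    qed simp
    also have "\<dots> \<le> \<bar>B\<bar>" using \<eta> by (simp add: mult_le_one mult.left_commute mult_left_le)
    finally show "y \<le> \<bar>B\<bar>" .
  qed
  moreover have "norm ((1 / norm v) *\<^sub>R v) \<le> 1" using False by simp
  ultimately have "((1 / norm v) *\<^sub>R v) \<bullet> H ((1 / norm v) *\<^sub>R v) \<le> qnorm H"
    unfolding qnorm_def by (intro cSup_upper) blast+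
  then have "(v \<bullet> H v) / norm v ^ 2 \<le> K"
    using q by (simp add: linear_cmul[OF lin] power2_eq_square)
  then show ?thesis using False by (simp add: divide_le_eq mult.commute)
qed

lemma cmodel_scaleR:
  assumes "linear H" and "0 \<le> a"
  shows "cmodel g H s (a *\<^sub>R u) = a * (g \<bullet> u) + 1/2 * a^2 * (H u \<bullet> u) + s/3 * a^3 * norm u ^ 3"
  using assms unfolding cmodel_def linear_cmul[OF assms(1)]
  by (simp add: power2_eq_square power3_eq_cube algebra_simps)

lemma cmodel_cauchy_point_le:
  fixes g :: "'v::euclidean_space"
  assumes lin: "linear H" and H: "\<And>v. v \<bullet> H v \<le> K * norm v ^ 2"
    and "0 < K" "0 < \<sigma>" "0 < e" and g: "e < norm g"
    and aC: "\<forall>\<alpha>\<ge>0. cmodel g H \<sigma> (- aC *\<^sub>R g) \<le> cmodel g H \<sigma> (- \<alpha> *\<^sub>R g)"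
  shows "cmodel g H \<sigma> (- aC *\<^sub>R g) \<le> - (e^2 * min (1/K) (1/sqrt (\<sigma>*e)) / 6)"
proof -
  define \<mu> where "\<mu> = min (1/K) (1/sqrt (\<sigma>*e))"
  have \<mu>: "0 < \<mu>" "\<mu> * K \<le> 1" using assms by (auto simp: \<mu>_def min_def field_simps)
  have "\<mu>^2 \<le> (1/sqrt (\<sigma>*e))^2" using \<mu> by (intro power_mono) (auto simp: \<mu>_def)
  then have \<sigma>\<mu>: "\<sigma> * e * \<mu>^2 \<le> 1" using assms by (simp add: power_divide field_simps)
  \<comment> \<open>Compare with the step along \<open>-g\<close> of length \<open>r = e \<mu>\<close>.\<close>
  define r where "r = e * \<mu>"
  define \<alpha> where "\<alpha> = r / norm g"
  have r: "0 < r" and \<alpha>: "0 \<le> \<alpha>" "\<alpha> * norm g = r"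
    using assms \<mu> by (auto simp: r_def \<alpha>_def)
  have "cmodel g H \<sigma> (- aC *\<^sub>R g) \<le> cmodel g H \<sigma> (- \<alpha> *\<^sub>R g)" using aC \<alpha> by blast
  also have "\<dots> = - \<alpha> * norm g ^ 2 + 1/2 * \<alpha>^2 * (H g \<bullet> g) + \<sigma>/3 * \<alpha>^3 * norm g ^ 3"
    unfolding cmodel_def linear_cmul[OF lin] using \<alpha>(1)
    by (simp add: dot_square_norm power2_eq_square power3_eq_cube algebra_simps)
  also have "\<dots> \<le> - \<alpha> * norm g ^ 2 + 1/2 * \<alpha>^2 * (K * norm g ^ 2) + \<sigma>/3 * \<alpha>^3 * norm g ^ 3"
    using H[of g] by (simp add: inner_commute mult_left_mono)
  also have "\<dots> = - r * norm g + 1/2 * r^2 * K + \<sigma>/3 * r^3"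
    using \<alpha>(2)[symmetric] by (simp add: power2_eq_square power3_eq_cube algebra_simps)
  also have "\<dots> \<le> - r * e + 1/2 * r^2 * K + \<sigma>/3 * r^3"
    using r g by simp
  also have "\<dots> = e^2 * \<mu> * (-1 + 1/2 * (\<mu> * K) + 1/3 * (\<sigma> * e * \<mu>^2))"
    by (simp add: r_def power2_eq_square power3_eq_cube algebra_simps)
  also have "\<dots> \<le> e^2 * \<mu> * (-1 + 1/2 + 1/3)"
    using \<mu> \<sigma>\<mu> by (intro mult_left_mono) auto
  finally show ?thesis by (simp add: \<mu>_def)
qed

lemma cmodel_eigenpoint_le:
  fixes g u :: "'v::euclidean_space"
  assumes lin: "linear H" and gu: "g \<bullet> u \<le> 0" and uHu: "u \<bullet> H u \<le> \<nu> * l * norm u ^ 2"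
    and neg: "\<nu> * l * norm u ^ 2 < 0" and l: "l \<le> - e" and "0 < \<nu>" "0 < e" "0 < \<sigma>"
    and aE: "\<forall>\<alpha>\<ge>0. cmodel g H \<sigma> (aE *\<^sub>R u) \<le> cmodel g H \<sigma> (\<alpha> *\<^sub>R u)"
  shows "cmodel g H \<sigma> (aE *\<^sub>R u) \<le> - ((\<nu>*e)^3 / (6*\<sigma>^2))"
proof -
  have u: "0 < norm u" using neg by (cases "u = 0") auto
  \<comment> \<open>Compare with the step along \<open>u\<close> of length \<open>t = \<nu> e / \<sigma>\<close>.\<close>
  define t where "t = \<nu> * e / \<sigma>"
  define \<alpha> where "\<alpha> = t / norm u"
  have t: "0 < t" and \<alpha>: "0 \<le> \<alpha>" "\<alpha> * norm u = t"
    using assms u by (auto simp: t_def \<alpha>_def)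
  have "cmodel g H \<sigma> (aE *\<^sub>R u) \<le> cmodel g H \<sigma> (\<alpha> *\<^sub>R u)" using aE \<alpha> by blast
  also have "\<dots> = \<alpha> * (g \<bullet> u) + 1/2 * \<alpha>^2 * (H u \<bullet> u) + \<sigma>/3 * \<alpha>^3 * norm u ^ 3"
    by (rule cmodel_scaleR[OF lin \<alpha>(1)])
  also have "\<dots> \<le> 1/2 * \<alpha>^2 * (\<nu> * l * norm u ^ 2) + \<sigma>/3 * \<alpha>^3 * norm u ^ 3"
  proof -
    have "\<alpha>^2 * (H u \<bullet> u) \<le> \<alpha>^2 * (\<nu> * l * norm u ^ 2)"
      using uHu by (simp add: inner_commute mult_left_mono)
    then show ?thesis using mult_nonneg_nonpos[OF \<alpha>(1) gu] by linarith
  qed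
  also have "\<dots> = 1/2 * t^2 * (\<nu> * l) + \<sigma>/3 * t^3"
    using \<alpha>(2)[symmetric] by (simp add: power2_eq_square power3_eq_cube algebra_simps)
  also have "\<dots> \<le> 1/2 * t^2 * (\<nu> * (- e)) + \<sigma>/3 * t^3"
    using mult_left_mono[OF l, of "t^2 * \<nu>"] assms by (simp add: algebra_simps)
  also have "\<dots> = - ((\<nu>*e)^3 / (6*\<sigma>^2))"
    using assms by (simp add: t_def power2_eq_square power3_eq_cube field_simps)
  finally show ?thesis .
qed

text \<open>The first term is the decrease at the Cauchy point, the second the one at the eigenpoint.\<close>
definition cubic_decrease :: "real \<Rightarrow> real \<Rightarrow> real \<Rightarrow> real \<Rightarrow> real \<Rightarrow> real" where
  "cubic_decrease K \<nu> \<sigma> \<epsilon>g \<epsilon>H =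
     min (\<epsilon>g^2 * min (1/K) (1/sqrt (\<sigma>*\<epsilon>g)) / 6) ((\<nu>*\<epsilon>H)^3 / (6*\<sigma>^2))"

lemma cubic_decrease_pos:
  "\<lbrakk>0 < K; 0 < \<nu>; 0 < \<sigma>; 0 < \<epsilon>g; 0 < \<epsilon>H\<rbrakk> \<Longrightarrow> 0 < cubic_decrease K \<nu> \<sigma> \<epsilon>g \<epsilon>H"
  by (simp add: cubic_decrease_def)

lemma cubic_decrease_antimono:
  assumes "0 < \<sigma>" "\<sigma> \<le> s" "0 < \<epsilon>g" "0 < \<nu>" "0 < \<epsilon>H"
  shows "cubic_decrease K \<nu> s \<epsilon>g \<epsilon>H \<le> cubic_decrease K \<nu> \<sigma> \<epsilon>g \<epsilon>H"
proof -
  have "1 / sqrt (s * \<epsilon>g) \<le> 1 / sqrt (\<sigma> * \<epsilon>g)"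
    using assms by (intro divide_left_mono) auto
  then have "\<epsilon>g^2 * min (1/K) (1/sqrt (s * \<epsilon>g)) / 6 \<le> \<epsilon>g^2 * min (1/K) (1/sqrt (\<sigma> * \<epsilon>g)) / 6"
    by (intro divide_right_mono mult_left_mono) auto
  moreover have "(\<nu>*\<epsilon>H)^3 / (6 * s^2) \<le> (\<nu>*\<epsilon>H)^3 / (6 * \<sigma>^2)"
    using assms by (intro divide_left_mono mult_left_mono power_mono) auto
  ultimately show ?thesis unfolding cubic_decrease_def by linarith
qed

lemma inverse_cubic_decrease_le:
  assumes "0 < K" "0 < \<nu>" "0 < s" "0 < \<epsilon>g" "\<epsilon>g \<le> 1" "0 < \<epsilon>H"
  shows "1 / cubic_decrease K \<nu> s \<epsilon>g \<epsilon>H \<le> max (1/\<epsilon>g^2) (1/\<epsilon>H^3) / cubic_decrease K \<nu> s 1 1"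
proof -
  define d where "d = cubic_decrease K \<nu> s 1 1"
  have d: "0 < d" using assms by (simp add: d_def cubic_decrease_pos)
  have d_eq: "d = min (min (1/K) (1/sqrt s) / 6) (\<nu>^3 / (6 * s^2))"
    by (simp add: d_def cubic_decrease_def)
  have "1 / sqrt s \<le> 1 / sqrt (s * \<epsilon>g)"
    using assms by (intro divide_left_mono) (auto simp: mult_le_cancel_left1)
  then have "min (1/K) (1/sqrt s) / 6 \<le> min (1/K) (1/sqrt (s * \<epsilon>g)) / 6"
    using assms by (intro divide_right_mono min.mono) auto
  then have "d \<le> min (1/K) (1/sqrt (s * \<epsilon>g)) / 6"
    unfolding d_eq by (rule min.coboundedI1)
  from mult_right_mono[OF this, of "\<epsilon>g^2"]
  have gradient_part: "d * \<epsilon>g^2 \<le> \<epsilon>g^2 * min (1/K) (1/sqrt (s * \<epsilon>g)) / 6"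
    by (simp only: times_divide_eq_left mult.commute) simp
  have "d * \<epsilon>H^3 \<le> \<nu>^3 / (6 * s^2) * \<epsilon>H^3"
    unfolding d_eq using assms by (intro mult_right_mono) auto
  then have curvature_part: "d * \<epsilon>H^3 \<le> (\<nu>*\<epsilon>H)^3 / (6 * s^2)"
    by (simp only: power_mult_distrib times_divide_eq_left times_divide_eq_right mult.commute)
  have "d * min (\<epsilon>g^2) (\<epsilon>H^3) = min (d * \<epsilon>g^2) (d * \<epsilon>H^3)"
    using d by (simp add: min_mult_distrib_left)
  also have "\<dots> \<le> cubic_decrease K \<nu> s \<epsilon>g \<epsilon>H"
    unfolding cubic_decrease_def by (rule min.mono[OF gradient_part curvature_part])
  finally have "1 / cubic_decrease K \<nu> s \<epsilon>g \<epsilon>H \<le> 1 / (d * min (\<epsilon>g^2) (\<epsilon>H^3))"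
    using d assms cubic_decrease_pos by (intro divide_left_mono) auto
  also have "\<dots> = max (1/\<epsilon>g^2) (1/\<epsilon>H^3) / d"
    using assms by (simp add: min_def max_def divide_le_eq_1 field_simps)
  finally show ?thesis by (simp add: d_def)
qed

lemma cubic_decrease_le_model_reduction:
  fixes g \<eta> :: "'v::euclidean_space"
  assumes sa: "self_adjoint H" and q: "qnorm H \<le> K"
    and K: "0 < K" and \<sigma>: "0 < \<sigma>" and \<nu>: "0 < \<nu>" and \<epsilon>g: "0 < \<epsilon>g" and \<epsilon>H: "0 < \<epsilon>H"
    and not_stop: "\<not> stop_cond \<epsilon>g \<epsilon>H g H"
    and cauchy: "\<exists>\<alpha>C. \<alpha>C \<ge> 0 \<and> (\<forall>\<alpha>\<ge>0. cmodel g H \<sigma> (- \<alpha>C *\<^sub>R g) \<le> cmodel g H \<sigma> (- \<alpha> *\<^sub>R g))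
                   \<and> - cmodel g H \<sigma> \<eta> \<ge> - cmodel g H \<sigma> (- \<alpha>C *\<^sub>R g)"
    and eigen: "lambda_min H < 0 \<longrightarrow>
               (\<exists>u \<alpha>E. u \<bullet> H u \<le> \<nu> * lambda_min H * norm u ^ 2
                   \<and> \<nu> * lambda_min H * norm u ^ 2 < 0
                   \<and> g \<bullet> u \<le> 0
                   \<and> \<alpha>E \<ge> 0 \<and> (\<forall>\<alpha>\<ge>0. cmodel g H \<sigma> (\<alpha>E *\<^sub>R u) \<le> cmodel g H \<sigma> (\<alpha> *\<^sub>R u))
                   \<and> - cmodel g H \<sigma> \<eta> \<ge> - cmodel g H \<sigma> (\<alpha>E *\<^sub>R u))"
  shows "cubic_decrease K \<nu> \<sigma> \<epsilon>g \<epsilon>H \<le> - cmodel g H \<sigma> \<eta>"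
proof -
  have lin: "linear H" using sa by (simp add: self_adjoint_def)
  from not_stop consider "\<epsilon>g < norm g" | "lambda_min H < - \<epsilon>H"
    unfolding stop_cond_def by linarith
  then show ?thesis
  proof cases
    case 1
    from cauchy obtain \<alpha>C where \<alpha>C:
      "\<forall>\<alpha>\<ge>0. cmodel g H \<sigma> (- \<alpha>C *\<^sub>R g) \<le> cmodel g H \<sigma> (- \<alpha> *\<^sub>R g)"
      "- cmodel g H \<sigma> \<eta> \<ge> - cmodel g H \<sigma> (- \<alpha>C *\<^sub>R g)" by blast
    have "\<epsilon>g^2 * min (1/K) (1/sqrt (\<sigma>*\<epsilon>g)) / 6 \<le> - cmodel g H \<sigma> \<eta>"
      using cmodel_cauchy_point_le[OF lin inner_le_qnorm[OF lin q] K \<sigma> \<epsilon>g 1 \<alpha>C(1)] \<alpha>C(2)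
      by linarith
    then show ?thesis unfolding cubic_decrease_def by (rule min.coboundedI1)
  next
    case 2
    then have "lambda_min H < 0" using \<epsilon>H by linarith
    with eigen obtain u \<alpha>E where u:
      "u \<bullet> H u \<le> \<nu> * lambda_min H * norm u ^ 2" "\<nu> * lambda_min H * norm u ^ 2 < 0" "g \<bullet> u \<le> 0"
      "\<forall>\<alpha>\<ge>0. cmodel g H \<sigma> (\<alpha>E *\<^sub>R u) \<le> cmodel g H \<sigma> (\<alpha> *\<^sub>R u)"
      "- cmodel g H \<sigma> \<eta> \<ge> - cmodel g H \<sigma> (\<alpha>E *\<^sub>R u)"
      by blast
    have "(\<nu>*\<epsilon>H)^3 / (6*\<sigma>^2) \<le> - cmodel g H \<sigma> \<eta>"
      using cmodel_eigenpoint_le[OF lin u(3,1,2) less_imp_le[OF 2] \<nu> \<epsilon>H \<sigma> u(4)] u(5) by linarith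
    then show ?thesis unfolding cubic_decrease_def by (rule min.coboundedI2)
  qed
qed

lemma sqrt_sq_add_minus_le:
  fixes K X :: real
  assumes K: "0 < K" and X: "0 \<le> X"
  shows "sqrt (K^2 + 4 * X) - K \<le> 2 * X * min (1/K) (1/sqrt X)"
proof -
  have "sqrt (K^2 + 4 * X) \<le> K + 2 * X / K"
    using assms by (intro real_le_lsqrt) (auto simp: power2_eq_square field_simps)
  moreover have "sqrt (K^2 + 4 * X) \<le> K + 2 * sqrt X"
  proof (rule real_le_lsqrt)
    have "(K + 2 * sqrt X)^2 = K^2 + 4 * K * sqrt X + 4 * (sqrt X)^2"
      by (simp add: power2_eq_square algebra_simps)
    then show "K^2 + 4 * X \<le> (K + 2 * sqrt X)^2" using assms by simp
  qed (use assms in simp)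
  ultimately show ?thesis
  proof (cases "1/K \<le> 1/sqrt X")
    case False
    have "2 * X * (1/sqrt X) = 2 * sqrt X"
      using real_div_sqrt[OF X] by (metis mult.assoc times_divide_eq_right mult_1_right)
    with False show ?thesis using \<open>sqrt (K^2 + 4 * X) \<le> K + 2 * sqrt X\<close> by (simp add: min_def)
  qed (simp add: min_def)
qed

lemma accuracy_cube_le_gradient_decrease:
  fixes a c K \<sigma> e \<rho> :: real
  assumes a: "0 \<le> a" and ac: "a \<le> c * (sqrt (K^2 + 4 * \<sigma> * e) - K)"
    and c: "c \<le> 1/18" "c \<le> (1 - \<rho>)/9" and K: "0 < K" and \<sigma>: "0 < \<sigma>" and e: "0 < e"
  shows "63 * a^3 \<le> 2 * \<sigma>^2 * (1 - \<rho>) * (e^2 * min (1/K) (1/sqrt (\<sigma>*e)) / 6)"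
proof -
  define X where "X = \<sigma> * e"
  define \<mu> where "\<mu> = min (1/K) (1/sqrt X)"
  have X: "0 < X" and \<mu>: "0 < \<mu>" using \<sigma> e K by (auto simp: X_def \<mu>_def)
  have "\<mu>^2 \<le> (1/sqrt X)^2" using \<mu> by (intro power_mono) (auto simp: \<mu>_def)
  then have X\<mu>: "X * \<mu>^2 \<le> 1" using X by (simp add: power_divide field_simps)
  have "sqrt (K^2) < sqrt (K^2 + 4 * X)" using X by (intro real_sqrt_less_mono) simp
  then have "0 < sqrt (K^2 + 4 * X) - K" using K by simp
  moreover have "0 \<le> c * (sqrt (K^2 + 4 * X) - K)" using a ac by (simp add: X_def mult.assoc)
  ultimately have c0: "0 \<le> c" by (simp add: zero_le_mult_iff)
  have "a \<le> c * (2 * X * \<mu>)"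
    using ac sqrt_sq_add_minus_le[OF K less_imp_le[OF X]] c0
    by (auto simp: X_def \<mu>_def mult.assoc intro: order_trans mult_left_mono)
  then have "a^3 \<le> (c * (2 * X * \<mu>))^3" using a by (intro power_mono)
  also have "\<dots> = 8 * c^2 * c * X^3 * \<mu>^3" by (simp add: power2_eq_square power3_eq_cube)
  also have "\<dots> \<le> 8 * (1/18)^2 * ((1 - \<rho>)/9) * X^3 * \<mu>^3"
    using c c0 X \<mu> by (intro mult_right_mono mult_mono mult_left_mono power_mono) auto
  also have "\<dots> = 8 / 2916 * ((1 - \<rho>) * \<sigma>^2 * e^2 * \<mu>) * (X * \<mu>^2)"
    by (simp add: X_def power2_eq_square power3_eq_cube field_simps)
  also have "\<dots> \<le> 8 / 2916 * ((1 - \<rho>) * \<sigma>^2 * e^2 * \<mu>)"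
    using X\<mu> c c0 \<mu> by (intro mult_left_le) auto
  finally have "a^3 \<le> 8 / 2916 * ((1 - \<rho>) * \<sigma>^2 * e^2 * \<mu>)" .
  moreover have "0 \<le> (1 - \<rho>) * \<sigma>^2 * e^2 * \<mu>" using c c0 \<mu> by simp
  moreover have "2 * \<sigma>^2 * (1 - \<rho>) * (e^2 * \<mu> / 6) = (1 - \<rho>) * \<sigma>^2 * e^2 * \<mu> / 3" by simp
  ultimately show ?thesis unfolding X_def[symmetric] \<mu>_def[symmetric] by linarith
qed

lemma accuracy_cube_le_curvature_decrease:
  fixes a b \<nu> e \<sigma> \<rho> :: real
  assumes a: "0 \<le> a" and ab: "a \<le> b * \<nu> * e"
    and b: "b \<le> 1/9" "b \<le> 2 * (1 - \<rho>)/9" and \<nu>: "0 < \<nu>" and e: "0 < e" and \<sigma>: "0 < \<sigma>"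
  shows "63 * a^3 \<le> 2 * \<sigma>^2 * (1 - \<rho>) * ((\<nu>*e)^3 / (6*\<sigma>^2))"
proof -
  define Y where "Y = \<nu> * e"
  have Y: "0 < Y" using \<nu> e by (simp add: Y_def)
  have "0 \<le> b * Y" using a ab by (simp add: Y_def mult.assoc)
  then have b0: "0 \<le> b" using Y by (simp add: zero_le_mult_iff)
  have "a^3 \<le> (b * Y)^3" using a ab by (intro power_mono) (auto simp: Y_def mult.assoc)
  also have "\<dots> = b^2 * b * Y^3" by (simp add: power2_eq_square power3_eq_cube)
  also have "\<dots> \<le> (1/9)^2 * (2 * (1 - \<rho>)/9) * Y^3"
    using b b0 Y by (intro mult_right_mono mult_mono power_mono) auto
  also have "\<dots> = 2 / 729 * ((1 - \<rho>) * Y^3)" by (simp add: power2_eq_square)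
  finally have "63 * a^3 \<le> 126 / 729 * ((1 - \<rho>) * Y^3)" by linarith
  moreover have "0 \<le> (1 - \<rho>) * Y^3" using b b0 Y by simp
  moreover have "2 * \<sigma>^2 * (1 - \<rho>) * (Y^3 / (6*\<sigma>^2)) = (1 - \<rho>) * Y^3 / 3"
    using \<sigma> by (simp add: field_simps)
  ultimately show ?thesis unfolding Y_def[symmetric] by linarith
qed

lemma accuracy_cube_le_cubic_decrease:
  assumes \<delta>H0: "0 \<le> \<delta>H" and \<delta>H: "\<delta>H \<le> min (min (1/18) ((1 - \<rho>)/9) * (sqrt (K^2 + 4 * \<sigma> * \<epsilon>g) - K))
                                (min (1/9) (2 * (1 - \<rho>)/9) * \<nu> * \<epsilon>H)"
    and \<rho>: "\<rho> < 1" and K: "0 < K" and \<sigma>: "0 < \<sigma>" and \<nu>: "0 < \<nu>" and \<epsilon>g: "0 < \<epsilon>g" and \<epsilon>H: "0 < \<epsilon>H"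
  shows "63 * \<delta>H^3 \<le> 2 * \<sigma>^2 * (1 - \<rho>) * cubic_decrease K \<nu> \<sigma> \<epsilon>g \<epsilon>H"
proof -
  from \<delta>H have \<delta>H_gradient: "\<delta>H \<le> min (1/18) ((1 - \<rho>)/9) * (sqrt (K^2 + 4 * \<sigma> * \<epsilon>g) - K)"
    and \<delta>H_curvature: "\<delta>H \<le> min (1/9) (2 * (1 - \<rho>)/9) * \<nu> * \<epsilon>H"
    by (simp_all only: min.bounded_iff)
  have p: "0 \<le> 2 * \<sigma>^2 * (1 - \<rho>)" using \<rho> by simp
  show ?thesis
    unfolding cubic_decrease_def min_mult_distrib_left[of "2 * \<sigma>^2 * (1 - \<rho>)"] if_P[OF p]
    using accuracy_cube_le_gradient_decrease[OF \<delta>H0 \<delta>H_gradient min.cobounded1 min.cobounded2 K \<sigma> \<epsilon>g]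
      accuracy_cube_le_curvature_decrease[OF \<delta>H0 \<delta>H_curvature min.cobounded1 min.cobounded2 \<nu> \<epsilon>H \<sigma>]
    by (intro min.boundedI)
qed

text \<open>For \<open>\<sigma> s \<ge> 6 a\<close> the negative cubic term absorbs the other two; otherwise
  \<open>s < 6 a / \<sigma>\<close> bounds each of them.\<close>
lemma cubic_error_le:
  fixes s a \<sigma> L \<delta> :: real
  assumes s: "0 \<le> s" and a: "0 \<le> a" and \<sigma>: "0 < \<sigma>" and L: "3 * L \<le> \<sigma>"
    and \<delta>: "0 \<le> \<delta>" "\<delta> \<le> 9 * a^2 / (4 * \<sigma>)"
  shows "\<delta> * s + a * s^2 / 2 + (L/2 - \<sigma>/3) * s^3 \<le> 63 * a^3 / (2 * \<sigma>^2)"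
proof (cases "6 * a \<le> \<sigma> * s")
  case True
  have "\<delta> * s \<le> 9 * a^2 / (4 * \<sigma>) * s" using \<delta> s by (intro mult_right_mono)
  also have "\<dots> \<le> 9 * (\<sigma> * s / 6)^2 / (4 * \<sigma>) * s"
    using True a \<sigma> s by (intro mult_right_mono divide_right_mono mult_left_mono power_mono) auto
  also have "\<dots> = \<sigma> * s^3 / 16" using \<sigma> by (simp add: power2_eq_square power3_eq_cube field_simps)
  finally have "\<delta> * s \<le> \<sigma> * s^3 / 16" .
  moreover have "a * s^2 / 2 \<le> (\<sigma> * s / 6) * s^2 / 2"
    using True s by (intro divide_right_mono mult_right_mono) auto
  moreover have "(L/2 - \<sigma>/3) * s^3 \<le> (- \<sigma>/6) * s^3" using L s by (intro mult_right_mono) auto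
  moreover have "0 \<le> \<sigma> * s^3" "0 \<le> 63 * a^3 / (2 * \<sigma>^2)" using \<sigma> s a by simp_all
  ultimately show ?thesis by (simp add: power2_eq_square power3_eq_cube)
next
  case False
  then have s6: "s \<le> 6 * a / \<sigma>" using \<sigma> by (simp add: field_simps)
  have "\<delta> * s \<le> 9 * a^2 / (4 * \<sigma>) * (6 * a / \<sigma>)" using \<delta> s6 s by (intro mult_mono) auto
  moreover have "a * s^2 / 2 \<le> a * (6 * a / \<sigma>)^2 / 2"
    using s6 s a by (intro divide_right_mono mult_left_mono power_mono) auto
  moreover have "(L/2 - \<sigma>/3) * s^3 \<le> 0" using L s \<sigma> by (intro mult_nonpos_nonneg) auto
  moreover have "9 * a^2 / (4 * \<sigma>) * (6 * a / \<sigma>) + a * (6 * a / \<sigma>)^2 / 2 = 63 * a^3 / (2 * \<sigma>^2)"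
    using \<sigma> by (simp add: power2_eq_square power3_eq_cube field_simps)
  ultimately show ?thesis by linarith
qed

lemma actual_reduction_ge_if_sigma_large:
  fixes g G \<eta> :: "'v::euclidean_space"
  assumes taylor: "\<bar>f1 - f0 - g \<bullet> \<eta> - 1/2 * (Hf \<eta> \<bullet> \<eta>)\<bar> \<le> 1/2 * L * norm \<eta> ^ 3"
    and hess_acc: "norm (H \<eta> - Hf \<eta>) \<le> \<delta>H * norm \<eta>" and grad_acc: "norm (G - g) \<le> \<delta>g"
    and \<delta>g: "0 \<le> \<delta>g" "\<delta>g \<le> 9 * \<delta>H^2 / (4 * \<sigma>)" and \<delta>H: "0 \<le> \<delta>H"
    and acc: "63 * \<delta>H^3 \<le> 2 * \<sigma>^2 * (1 - \<rho>) * (- cmodel G H \<sigma> \<eta>)"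
    and \<sigma>: "0 < \<sigma>" "3 * L \<le> \<sigma>"
  shows "\<rho> * (- cmodel G H \<sigma> \<eta>) \<le> f0 - f1"
proof -
  define s where "s = norm \<eta>"
  have s: "0 \<le> s" by (simp add: s_def)
  have grad_err: "(g - G) \<bullet> \<eta> \<le> \<delta>g * s"
    using norm_cauchy_schwarz[of "g - G" \<eta>] grad_acc s
    by (simp add: s_def norm_minus_commute mult_right_mono order_trans)
  have "(Hf \<eta> - H \<eta>) \<bullet> \<eta> \<le> norm (Hf \<eta> - H \<eta>) * s"
    using norm_cauchy_schwarz[of "Hf \<eta> - H \<eta>" \<eta>] by (simp add: s_def)
  also have "\<dots> \<le> \<delta>H * s * s" using hess_acc s by (simp add: s_def norm_minus_commute mult_right_mono)
  finally have hess_err: "(Hf \<eta> - H \<eta>) \<bullet> \<eta> \<le> \<delta>H * s^2" by (simp add: power2_eq_square mult.assoc)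
  have "f1 - f0 - cmodel G H \<sigma> \<eta> \<le> (g - G) \<bullet> \<eta> + 1/2 * ((Hf \<eta> - H \<eta>) \<bullet> \<eta>) + (L/2 - \<sigma>/3) * s^3"
    using taylor unfolding cmodel_def s_def abs_le_iff by (simp add: inner_diff_left algebra_simps)
  also have "\<dots> \<le> \<delta>g * s + \<delta>H * s^2 / 2 + (L/2 - \<sigma>/3) * s^3" using grad_err hess_err by simp
  also have "\<dots> \<le> 63 * \<delta>H^3 / (2 * \<sigma>^2)" by (rule cubic_error_le[OF s \<delta>H \<sigma>(1,2) \<delta>g])
  also have "\<dots> \<le> (1 - \<rho>) * (- cmodel G H \<sigma> \<eta>)" using acc \<sigma> by (simp add: field_simps)
  finally show ?thesis by (simp add: algebra_simps)
qed

lemma valid_run_iteration_outcome: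
  fixes fs :: "nat \<Rightarrow> 'm \<Rightarrow> real" and R :: "'m \<Rightarrow> 'v::euclidean_space \<Rightarrow> 'm"
  assumes vr: "valid_run fs n R \<rho>TH \<gamma> \<sigma>0 \<nu> LH KH \<epsilon>g \<epsilon>H \<delta>g \<delta>H x \<sigma> G H \<eta>"
    and \<rho>TH: "0 < \<rho>TH" "\<rho>TH < 1" and \<gamma>: "1 < \<gamma>" and \<nu>: "0 < \<nu>" and KH: "0 < KH"
    and running: "\<forall>j\<le>k. \<not> stop_cond \<epsilon>g \<epsilon>H (G j) (H j)"
    and \<sigma>: "0 < \<sigma> k" "\<sigma> k \<le> 3 * \<gamma> * LH"
  shows "(favg fs n (x (Suc k)) \<le> favg fs n (x k) - \<rho>TH * cubic_decrease KH \<nu> (3 * \<gamma> * LH) \<epsilon>g \<epsilon>H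
            \<and> \<sigma> (Suc k) = \<sigma> k / \<gamma>)
       \<or> (favg fs n (x (Suc k)) = favg fs n (x k) \<and> \<sigma> (Suc k) = \<gamma> * \<sigma> k \<and> \<gamma> * \<sigma> k \<le> 3 * \<gamma> * LH)"
proof -
  let ?f = "favg fs n" and ?pb = "\<lambda>v. favg fs n (R (x k) v)"
  define T where "T = - cmodel (G k) (H k) (\<sigma> k) (\<eta> k)"
  have executed: "\<forall>j<k. \<not> stop_cond \<epsilon>g \<epsilon>H (G j) (H j)"
    and not_stop: "\<not> stop_cond \<epsilon>g \<epsilon>H (G k) (H k)" using running by auto
  note run = vr[unfolded valid_run_def Let_def]
  have \<epsilon>: "0 < \<epsilon>g" "0 < \<epsilon>H" and \<delta>: "0 < \<delta>g" "0 < \<delta>H" using run by auto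
  have decrease: "cubic_decrease KH \<nu> (\<sigma> k) \<epsilon>g \<epsilon>H \<le> T"
    unfolding T_def
    by (intro cubic_decrease_le_model_reduction) (use run executed not_stop KH \<sigma> \<nu> \<epsilon> in blast)+
  have "63 * \<delta>H^3 \<le> 2 * \<sigma> k^2 * (1 - \<rho>TH) * cubic_decrease KH \<nu> (\<sigma> k) \<epsilon>g \<epsilon>H"
    by (rule accuracy_cube_le_cubic_decrease) (use run executed \<delta> \<rho>TH KH \<sigma> \<nu> \<epsilon> in auto)
  also have "\<dots> \<le> 2 * \<sigma> k^2 * (1 - \<rho>TH) * T"
    using decrease \<rho>TH by (intro mult_left_mono) auto
  finally have accurate: "63 * \<delta>H^3 \<le> 2 * \<sigma> k^2 * (1 - \<rho>TH) * T" .
  have T_ge: "cubic_decrease KH \<nu> (3 * \<gamma> * LH) \<epsilon>g \<epsilon>H \<le> T"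
    using cubic_decrease_antimono[OF \<sigma> \<epsilon>(1) \<nu> \<epsilon>(2), where K = KH] decrease by linarith
  have T_pos: "0 < T" using cubic_decrease_pos[OF KH \<nu> \<sigma>(1) \<epsilon>] decrease by linarith
  have update: "if \<rho>TH \<le> (?f (x k) - ?pb (\<eta> k)) / T
      then x (Suc k) = R (x k) (\<eta> k) \<and> \<sigma> (Suc k) = \<sigma> k / \<gamma>
      else x (Suc k) = x k \<and> \<sigma> (Suc k) = \<gamma> * \<sigma> k"
    unfolding T_def using run executed not_stop by blast
  show ?thesis
  proof (cases "\<rho>TH \<le> (?f (x k) - ?pb (\<eta> k)) / T")
    case True
    then have "\<rho>TH * T \<le> ?f (x k) - ?pb (\<eta> k)" using T_pos by (simp add: pos_le_divide_eq mult.commute)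
    moreover have "\<rho>TH * cubic_decrease KH \<nu> (3 * \<gamma> * LH) \<epsilon>g \<epsilon>H \<le> \<rho>TH * T"
      using T_ge \<rho>TH by simp
    ultimately show ?thesis using True update by auto
  next
    case False
    have "\<sigma> k < 3 * LH"
    proof (rule ccontr)
      assume "\<not> \<sigma> k < 3 * LH"
      then have "\<rho>TH * T \<le> ?f (x k) - ?pb (\<eta> k)"
        unfolding T_def
        by (intro actual_reduction_ge_if_sigma_large[where \<delta>H = \<delta>H and \<delta>g = \<delta>g])
          (use run executed not_stop \<delta> \<sigma> accurate in \<open>auto simp: T_def\<close>)
      with False T_pos show False by (simp add: pos_le_divide_eq mult.commute)
    qed
    then show ?thesis using False update \<gamma> by auto
  qed
qed

lemma iterations_le_potential_drop:
  fixes f \<sigma> :: "nat \<Rightarrow> real"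
  assumes c: "0 < c" and \<gamma>: "1 < \<gamma>" and \<sigma>0: "0 < \<sigma> 0" "\<sigma> 0 \<le> smax" and fmin: "\<And>k. fmin \<le> f k"
    and step: "\<And>k. k < N \<Longrightarrow> 0 < \<sigma> k \<Longrightarrow> \<sigma> k \<le> smax \<Longrightarrow>
        (f (Suc k) \<le> f k - c \<and> \<sigma> (Suc k) = \<sigma> k / \<gamma>)
      \<or> (f (Suc k) = f k \<and> \<sigma> (Suc k) = \<gamma> * \<sigma> k \<and> \<gamma> * \<sigma> k \<le> smax)"
  shows "real N \<le> 2 * (f 0 - fmin) / c + log \<gamma> (smax / \<sigma> 0)"
proof -
  \<comment> \<open>A success lowers \<open>2 f / c\<close> by at least 2 and \<open>log\<^sub>\<gamma> \<sigma>\<close> by 1, a failure raises \<open>log\<^sub>\<gamma> \<sigma>\<close> by 1.\<close>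
  define \<Psi> where "\<Psi> k = 2 * f k / c - log \<gamma> (\<sigma> k)" for k
  have "0 < \<sigma> k \<and> \<sigma> k \<le> smax \<and> \<Psi> k + k \<le> \<Psi> 0" if "k \<le> N" for k
    using that
  proof (induction k)
    case 0
    then show ?case using \<sigma>0 by simp
  next
    case (Suc k)
    then have IH: "0 < \<sigma> k" "\<sigma> k \<le> smax" "\<Psi> k + k \<le> \<Psi> 0" by auto
    from step[OF _ IH(1,2)] Suc.prems consider
        (success) "f (Suc k) \<le> f k - c" "\<sigma> (Suc k) = \<sigma> k / \<gamma>"
      | (failure) "f (Suc k) = f k" "\<sigma> (Suc k) = \<gamma> * \<sigma> k" "\<gamma> * \<sigma> k \<le> smax"
      by force
    then show ?case
    proof cases
      case success
      have "2 * f (Suc k) / c \<le> 2 * f k / c - 2"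
        using success(1) c by (simp add: field_simps)
      moreover have "log \<gamma> (\<sigma> (Suc k)) = log \<gamma> (\<sigma> k) - 1"
        using success(2) IH(1) \<gamma> by (simp add: log_divide)
      moreover have "\<sigma> k / \<gamma> \<le> \<sigma> k"
        using IH(1) \<gamma> by (simp add: divide_le_eq mult_le_cancel_left1)
      ultimately show ?thesis using success IH \<gamma> by (auto simp: \<Psi>_def)
    next
      case failure
      have "log \<gamma> (\<sigma> (Suc k)) = log \<gamma> (\<sigma> k) + 1"
        using failure(2) IH(1) \<gamma> by (simp add: log_mult)
      then show ?thesis using failure IH \<gamma> by (simp add: \<Psi>_def)
    qed
  qed
  then have "0 < \<sigma> N" "\<sigma> N \<le> smax" "\<Psi> N + N \<le> \<Psi> 0" by auto
  moreover from this(1,2) have "log \<gamma> (\<sigma> N) \<le> log \<gamma> smax" using \<gamma> by simp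
  moreover have "2 * f N / c \<ge> 2 * fmin / c" using fmin c by (simp add: divide_right_mono)
  moreover have "log \<gamma> (smax / \<sigma> 0) = log \<gamma> smax - log \<gamma> (\<sigma> 0)"
    using \<sigma>0 by (simp add: log_divide_pos)
  ultimately show ?thesis by (simp add: \<Psi>_def diff_divide_distrib)
qed

lemma ex_le_if_prefixes_bounded:
  assumes bounded: "\<And>N. \<forall>j<N. \<not> P j \<Longrightarrow> real N \<le> B"
  shows "\<exists>k. real k \<le> B \<and> P k"
proof -
  have "0 \<le> B" using bounded[of 0] by simp
  define N where "N = nat \<lfloor>B\<rfloor> + 1"
  have "B < real N" using \<open>0 \<le> B\<close> by (simp add: N_def) linarith
  then have "\<not> (\<forall>j<N. \<not> P j)" using bounded[of N] by (meson linorder_not_le)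
  then obtain k where "k < N" "P k" by blast
  moreover from \<open>k < N\<close> have "real k \<le> B" using \<open>0 \<le> B\<close> by (simp add: N_def) linarith
  ultimately show ?thesis by blast
qed

lemma valid_run_iterations_le:
  fixes fs :: "nat \<Rightarrow> 'm \<Rightarrow> real" and R :: "'m \<Rightarrow> 'v::euclidean_space \<Rightarrow> 'm"
  assumes vr: "valid_run fs n R \<rho>TH \<gamma> \<sigma>0 \<nu> LH KH \<epsilon>g \<epsilon>H \<delta>g \<delta>H x \<sigma> G H \<eta>"
    and \<rho>TH: "0 < \<rho>TH" "\<rho>TH < 1" and \<gamma>: "1 < \<gamma>" and \<nu>: "0 < \<nu>" and LH: "0 < LH" and KH: "0 < KH"
    and \<sigma>0: "0 < \<sigma>0" "\<sigma>0 \<le> 3 * \<gamma> * LH"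
    and xm: "\<forall>y. favg fs n xm \<le> favg fs n y" and \<Delta>: "favg fs n (x 0) - favg fs n xm \<le> \<Delta>"
    and running: "\<forall>j<N. \<not> stop_cond \<epsilon>g \<epsilon>H (G j) (H j)"
  shows "real N \<le> (2 * \<Delta> / (\<rho>TH * cubic_decrease KH \<nu> (3 * \<gamma> * LH) 1 1) + log \<gamma> (3 * \<gamma> * LH / \<sigma>0))
                   * max (1 / \<epsilon>g^2) (1 / \<epsilon>H^3)"
proof -
  define smax where "smax = 3 * \<gamma> * LH"
  define c where "c = \<rho>TH * cubic_decrease KH \<nu> smax \<epsilon>g \<epsilon>H"
  define d where "d = \<rho>TH * cubic_decrease KH \<nu> smax 1 1"
  define M where "M = max (1 / \<epsilon>g^2) (1 / \<epsilon>H^3)"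
  define L where "L = log \<gamma> (smax / \<sigma>0)"
  have \<epsilon>: "0 < \<epsilon>g" "\<epsilon>g < 1" "0 < \<epsilon>H" and \<sigma>_0: "\<sigma> 0 = \<sigma>0"
    using vr by (auto simp: valid_run_def Let_def)
  have smax: "0 < smax" using \<gamma> LH by (simp add: smax_def)
  have c: "0 < c" and d: "0 < d" using \<rho>TH KH \<nu> smax \<epsilon> by (simp_all add: c_def d_def cubic_decrease_pos)
  have "real N \<le> 2 * (favg fs n (x 0) - favg fs n xm) / c + L"
    using iterations_le_potential_drop[of c \<gamma> \<sigma> smax "favg fs n xm" "\<lambda>k. favg fs n (x k)" N]
      valid_run_iteration_outcome[OF vr \<rho>TH \<gamma> \<nu> KH] running c \<gamma> \<sigma>0 \<sigma>_0 xm
    by (simp add: c_def smax_def L_def)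
  also have "\<dots> \<le> 2 * \<Delta> * (M / d) + L * M"
  proof (rule add_mono)
    have "1 / cubic_decrease KH \<nu> smax \<epsilon>g \<epsilon>H / \<rho>TH \<le> M / cubic_decrease KH \<nu> smax 1 1 / \<rho>TH"
      unfolding M_def using \<rho>TH
      by (intro divide_right_mono inverse_cubic_decrease_le[OF KH \<nu> smax \<epsilon>(1) less_imp_le[OF \<epsilon>(2)] \<epsilon>(3)]) simp
    then have "1 / c \<le> M / d" by (simp add: c_def d_def mult.commute)
    moreover have "0 \<le> favg fs n (x 0) - favg fs n xm" using xm by simp
    ultimately have "2 * (favg fs n (x 0) - favg fs n xm) * (1 / c) \<le> 2 * \<Delta> * (M / d)"
      using \<Delta> c by (intro mult_mono) auto
    then show "2 * (favg fs n (x 0) - favg fs n xm) / c \<le> 2 * \<Delta> * (M / d)" by simp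
    have "1 \<le> M" using \<epsilon> by (simp add: M_def le_max_iff_disj power_le_one)
    moreover have "0 \<le> L" using \<sigma>0 \<gamma> smax by (simp add: L_def smax_def)
    ultimately show "L \<le> L * M" by (simp add: mult_le_cancel_left1)
  qed
  finally show ?thesis by (simp add: M_def L_def d_def smax_def algebra_simps)
qed

theorem theorem3p9:
  fixes \<rho>TH \<gamma> \<sigma>0 \<nu> LH KH \<Delta> :: real
  assumes "0 < \<rho>TH" "\<rho>TH < 1" "\<gamma> > 1" "\<sigma>0 > 0" "0 < \<nu>" "\<nu> < 1"
    and "LH > 0" "KH > 0" "\<sigma>0 \<le> 2 * \<gamma> * LH"
  shows "\<exists>C. \<forall>(fs :: nat \<Rightarrow> 'm \<Rightarrow> real) n (R :: 'm \<Rightarrow> 'v::euclidean_space \<Rightarrow> 'm)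
            \<epsilon>g \<epsilon>H \<delta>g \<delta>H x \<sigma> G H \<eta>.
           valid_run fs n R \<rho>TH \<gamma> \<sigma>0 \<nu> LH KH \<epsilon>g \<epsilon>H \<delta>g \<delta>H x \<sigma> G H \<eta>
           \<and> (\<exists>xm. (\<forall>y. favg fs n xm \<le> favg fs n y) \<and> favg fs n (x 0) - favg fs n xm \<le> \<Delta>)
           \<longrightarrow> (\<exists>k. real k \<le> C * max (1 / \<epsilon>g^2) (1 / \<epsilon>H^3)
                    \<and> stop_cond \<epsilon>g \<epsilon>H (G k) (H k))"
proof -
  define C where "C = 2 * \<Delta> / (\<rho>TH * cubic_decrease KH \<nu> (3 * \<gamma> * LH) 1 1) + log \<gamma> (3 * \<gamma> * LH / \<sigma>0)"
  have "\<sigma>0 \<le> 3 * \<gamma> * LH" using assms by simp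
  show ?thesis
  proof (intro exI[of _ C] allI impI, elim conjE exE)
    fix fs :: "nat \<Rightarrow> 'm \<Rightarrow> real" and n and R :: "'m \<Rightarrow> 'v \<Rightarrow> 'm" and \<epsilon>g \<epsilon>H \<delta>g \<delta>H x \<sigma> G H \<eta> xm
    assume "valid_run fs n R \<rho>TH \<gamma> \<sigma>0 \<nu> LH KH \<epsilon>g \<epsilon>H \<delta>g \<delta>H x \<sigma> G H \<eta>"
      and "\<forall>y. favg fs n xm \<le> favg fs n y" and "favg fs n (x 0) - favg fs n xm \<le> \<Delta>"
    then show "\<exists>k. real k \<le> C * max (1 / \<epsilon>g^2) (1 / \<epsilon>H^3) \<and> stop_cond \<epsilon>g \<epsilon>H (G k) (H k)"
      unfolding C_def using assms \<open>\<sigma>0 \<le> 3 * \<gamma> * LH\<close>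
      by (intro ex_le_if_prefixes_bounded valid_run_iterations_le) auto
  qed
qed

end
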